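(* Let $n\geq 1$ and let $a$ and $b_j,c_j,d_j$, $j=1,\dots,n$, be (nonzero complex) parameters such that the product $b_jc_jd_j$ is independent of $j$. Put $e=a^2/(b_jc_jd_j)$ (which is then independent of $j$). Then $$ \det_{1\leq j,k\leq n}\left(\frac{(b_j,c_j,d_j)_{k-1}}{(a/b_j,a/c_j,a/d_j)_{k-1}} \right) =\left(\frac{a}{e}\right)^{\binom n2}\prod_{j=2}^n \frac{(aq^{j-2})_{j-1}}{(eq^{j-2})_{j-1}} \det_{1\leq j,k\leq n}\left(\frac{(a/b_jc_j,\,a/b_jd_j,\,a/c_jd_j)_{k-1}} {(a/b_j,a/c_j,a/d_j)_{k-1}}\right). $$
   Context: Fix complex numbers $p,q$ with $|p|<1$. Define $\theta(x)=\prod_{j=0}^\infty(1-p^jx)(1-p^{j+1}/x)$ for $x\neq 0$, the elliptic shifted factorial $(a)_k=\theta(a)\theta(aq)\cdots\theta(aq^{k-1})$ (with $(a)_0=1$), and $(a_1,\dots,a_m)_k=(a_1)_k\cdots(a_m)_k$. Expressions such as $a/b_jc_j$ mean $a/(b_jc_j)$. The identity is understood for parameters where all denominators are nonzero. *)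

theory Defs
  imports "HOL-Analysis.Infinite_Products" "Jordan_Normal_Form.Determinant"
begin

definition theta :: "complex \<Rightarrow> complex \<Rightarrow> complex" where
  "theta p x = (\<Prod>j. (1 - p ^ j * x) * (1 - p ^ (j + 1) / x))"

definition eshift :: "complex \<Rightarrow> complex \<Rightarrow> complex \<Rightarrow> nat \<Rightarrow> complex" where
  "eshift p q a k = (\<Prod>i<k. theta p (a * q ^ i))"

end

(* Write s = a / (b_j c_j d_j). The intermediate matrices with entries
     (x)_min(m,k) (xs)_(k - min(m,k)) / (a/x)_k,  multiplied over x = b_j, c_j, d_j,
   interpolate between the right-hand matrix (m = 0) and the left-hand one (m = n).
   The three-term addition formula for theta shows that passing from m to m + 1 replaces
   each column k > m by a combination of itself and column k - 1, so the determinant only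
   picks up the diagonal coefficients, whose product is the prefactor.
   The addition formula is proved for generic parameters by a Liouville argument: the two
   sides differ by a holomorphic function on the punctured plane with the same quasi-periodicity
   under z |-> p z as a product of two thetas whose zeros it shares, so their quotient is a
   bounded entire function of log z.  Continuity removes the genericity, and p = 0 is a
   rational identity. *)

theory Submission
  imports "HOL-Complex_Analysis.Complex_Analysis" Defs
begin

section \<open>The theta function\<close>

definition qpoch_inf :: "complex \<Rightarrow> complex \<Rightarrow> complex" where
  "qpoch_inf p x = (\<Prod>j. 1 - p ^ j * x)"

lemma qpoch_inf_has_prod:
  assumes "norm p < 1"
  shows "(\<lambda>j. 1 - p ^ j * x) has_prod qpoch_inf p x"
proof -
  have "summable (\<lambda>j. norm p ^ j * norm x)"
    using assms by (intro summable_mult2 summable_geometric) auto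
  then have "summable (\<lambda>j. norm ((1 - p ^ j * x) - 1))"
    by (simp add: norm_mult norm_power)
  then have "convergent_prod (\<lambda>j. 1 - p ^ j * x)"
    by (intro abs_convergent_prod_imp_convergent_prod summable_imp_abs_convergent_prod)
  then show ?thesis
    unfolding qpoch_inf_def by (simp add: convergent_prod_has_prod_iff)
qed

lemma qpoch_inf_unfold:
  assumes "norm p < 1"
  shows "qpoch_inf p x = (1 - x) * qpoch_inf p (p * x)"
proof -
  have "(\<lambda>j. 1 - p ^ Suc j * x) has_prod qpoch_inf p (p * x)"
    using qpoch_inf_has_prod[OF assms, of "p * x"] by (simp add: mult.assoc mult.left_commute)
  then have "(\<lambda>j. 1 - p ^ j * x) has_prod (qpoch_inf p (p * x) * (1 - p ^ 0 * x))"
    by (rule has_prod_Suc_imp[where f = "\<lambda>j. 1 - p ^ j * x"])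
  with qpoch_inf_has_prod[OF assms, of x] show ?thesis
    by (metis has_prod_unique2 mult.commute mult_1 power_0)
qed

lemma qpoch_inf_eq_0_iff:
  assumes "norm p < 1"
  shows "qpoch_inf p x = 0 \<longleftrightarrow> (\<exists>j. p ^ j * x = 1)"
  using has_prod_eq_0_iff[OF qpoch_inf_has_prod[OF assms, of x]] by (auto simp: image_iff)

lemma qpoch_inf_self_nonzero:
  assumes "norm p < 1"
  shows "qpoch_inf p p \<noteq> 0"
proof
  assume "qpoch_inf p p = 0"
  then obtain j where "p ^ Suc j = 1"
    using qpoch_inf_eq_0_iff[OF assms] by (auto simp: mult.commute)
  then have "norm p ^ Suc j = 1"
    by (metis norm_one norm_power)
  moreover have "norm p ^ Suc j < 1 ^ Suc j"
    using assms by (intro power_strict_mono) auto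
  ultimately show False by simp
qed

lemma uniform_limit_qpoch_inf:
  assumes "norm p < 1"
  shows "uniform_limit (cball x 1) (\<lambda>N y. \<Prod>j<N. 1 - p ^ j * y) (qpoch_inf p) sequentially"
proof -
  have "uniformly_convergent_on (cball x 1) (\<lambda>N y. \<Prod>j<N. 1 - p ^ j * y)"
  proof (rule uniformly_convergent_on_prod')
    show "uniformly_convergent_on (cball x 1) (\<lambda>N y. \<Sum>j<N. norm (1 - p ^ j * y - 1))"
    proof (rule Weierstrass_m_test'[where M = "\<lambda>j. norm p ^ j * (norm x + 1)"])
      fix j y assume "y \<in> cball x 1"
      then have "norm y \<le> norm x + 1"
        using norm_triangle_ineq2[of y x] by (auto simp: dist_norm norm_minus_commute)
      then show "norm (norm (1 - p ^ j * y - 1)) \<le> norm p ^ j * (norm x + 1)"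
        by (simp add: norm_mult norm_power mult_left_mono)
    next
      show "summable (\<lambda>j. norm p ^ j * (norm x + 1))"
        using assms by (intro summable_mult2 summable_geometric) auto
    qed
  qed (auto intro!: continuous_intros)
  moreover have "lim (\<lambda>N. \<Prod>j<N. 1 - p ^ j * y) = qpoch_inf p y" for y
  proof -
    have "(\<lambda>N. \<Prod>j\<le>N. 1 - p ^ j * y) \<longlonglongrightarrow> qpoch_inf p y"
      using qpoch_inf_has_prod[OF assms, of y]
      unfolding qpoch_inf_def by (intro convergent_prod_LIMSEQ) (simp add: has_prod_iff)
    then show ?thesis
      by (intro limI) (simp add: LIMSEQ_lessThan_iff_atMost)
  qed
  ultimately show ?thesis
    by (simp add: uniformly_convergent_uniform_limit_iff)
qed

lemma holomorphic_qpoch_inf: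
  assumes "norm p < 1"
  shows "qpoch_inf p holomorphic_on UNIV"
proof (rule holomorphic_uniform_sequence[where f = "\<lambda>N y. \<Prod>j<N. 1 - p ^ j * y"])
  show "\<exists>d>0. cball x d \<subseteq> UNIV \<and>
      uniform_limit (cball x d) (\<lambda>N y. \<Prod>j<N. 1 - p ^ j * y) (qpoch_inf p) sequentially" for x
    using uniform_limit_qpoch_inf[OF assms, of x] by (intro exI[of _ 1]) auto
qed (auto intro!: holomorphic_intros)

lemma holomorphic_on_qpoch_inf_comp [holomorphic_intros]:
  assumes "norm p < 1" "f holomorphic_on S"
  shows "(\<lambda>z. qpoch_inf p (f z)) holomorphic_on S"
  using holomorphic_on_compose_gen[OF assms(2) holomorphic_qpoch_inf[OF assms(1)]]
  by (simp add: o_def)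

lemma theta_eq_qpoch_inf:
  assumes "norm p < 1"
  shows "theta p x = qpoch_inf p x * qpoch_inf p (p / x)"
proof -
  have "(\<lambda>j. (1 - p ^ j * x) * (1 - p ^ j * (p / x))) has_prod (qpoch_inf p x * qpoch_inf p (p / x))"
    by (intro has_prod_mult qpoch_inf_has_prod assms)
  then have "(\<lambda>j. (1 - p ^ j * x) * (1 - p ^ (j + 1) / x)) has_prod (qpoch_inf p x * qpoch_inf p (p / x))"
    by (simp add: ac_simps)
  then show ?thesis
    unfolding theta_def by (rule has_prod_unique[symmetric])
qed

lemma theta_eq_one_minus:
  assumes "norm p < 1"
  shows "theta p x = (1 - x) * (qpoch_inf p (p * x) * qpoch_inf p (p / x))"
  unfolding theta_eq_qpoch_inf[OF assms] by (subst qpoch_inf_unfold[OF assms, of x]) simp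

lemma theta_one: "norm p < 1 \<Longrightarrow> theta p 1 = 0"
  using theta_eq_one_minus[of p 1] by simp

lemma theta_nome_zero: "theta 0 x = 1 - x"
  using theta_eq_one_minus[of 0 x] by (simp add: qpoch_inf_def)

lemma theta_inverse:
  assumes "norm p < 1" "x \<noteq> 0"
  shows "theta p (1 / x) = - theta p x / x"
  using assms by (simp add: theta_eq_one_minus field_simps)

lemma theta_mult_nome:
  assumes "norm p < 1" "p \<noteq> 0" "x \<noteq> 0"
  shows "theta p (p * x) = - theta p x / x"
proof -
  have "theta p (p * x) = qpoch_inf p (p * x) * qpoch_inf p (1 / x)"
    using assms by (simp add: theta_eq_qpoch_inf)
  also have "\<dots> = qpoch_inf p (p * x) * ((1 - 1 / x) * qpoch_inf p (p / x))"
    using qpoch_inf_unfold[OF assms(1), of "1 / x"] by simp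
  finally show ?thesis
    using assms by (simp add: theta_eq_one_minus field_simps)
qed

lemma theta_div_nome:
  assumes "norm p < 1" "p \<noteq> 0" "x \<noteq> 0"
  shows "theta p (x / p) = - (x / p) * theta p x"
  using theta_mult_nome[OF assms(1,2), of "x / p"] assms by (simp add: field_simps)

lemma holomorphic_on_theta_comp:
  assumes "norm p < 1" "f holomorphic_on S" "\<And>z. z \<in> S \<Longrightarrow> f z \<noteq> 0"
  shows "(\<lambda>z. theta p (f z)) holomorphic_on S"
proof -
  have "(\<lambda>z. qpoch_inf p (f z) * qpoch_inf p (p / f z)) holomorphic_on S"
    using assms by (intro holomorphic_intros) auto
  then show ?thesis
    by (simp add: theta_eq_qpoch_inf[OF assms(1)])
qed

lemma holomorphic_on_theta: "norm p < 1 \<Longrightarrow> theta p holomorphic_on - {0}"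
  using holomorphic_on_theta_comp[of p "\<lambda>z. z" "- {0}"] by simp

lemma continuous_on_theta_comp:
  assumes "norm p < 1" "continuous_on S f" "\<And>z. z \<in> S \<Longrightarrow> f z \<noteq> 0"
  shows "continuous_on S (\<lambda>z. theta p (f z))"
proof (rule continuous_on_compose2[OF _ assms(2)])
  show "continuous_on (- {0}) (theta p)"
    using holomorphic_on_theta[OF assms(1)] by (rule holomorphic_on_imp_continuous_on)
qed (use assms(3) in auto)

lemma theta_has_field_derivative:
  assumes "norm p < 1" "x \<noteq> 0"
  shows "(theta p has_field_derivative deriv (theta p) x) (at x)"
  using assms by (intro holomorphic_derivI[OF holomorphic_on_theta]) auto

lemma power_int_orbit_invariant:
  fixes p w :: "'a::field"
  assumes "p \<noteq> 0" "w \<noteq> 0" "P w" and step: "\<And>z. z \<noteq> 0 \<Longrightarrow> P (p * z) \<longleftrightarrow> P z"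
  shows "P (p powi k * w)"
proof (induction k rule: int_induct[where k = 0])
  case base
  then show ?case using assms(3) by simp
next
  case (step1 i)
  have "P (p * (p powi i * w))"
    using step[of "p powi i * w"] step1 assms(1,2) by simp
  moreover have "p powi (i + 1) * w = p * (p powi i * w)"
    using assms(1) by (simp add: power_int_add mult_ac)
  ultimately show ?case by (simp only:)
next
  case (step2 i)
  have "p powi i * w = p * (p powi (i - 1) * w)"
    using assms(1) by (simp add: power_int_diff mult_ac)
  with step2 show ?case
    using step[of "p powi (i - 1) * w"] assms(1,2) by simp
qed

lemma theta_eq_0_iff:
  assumes p: "norm p < 1" "p \<noteq> 0" and "x \<noteq> 0"
  shows "theta p x = 0 \<longleftrightarrow> (\<exists>k::int. x = p powi k)"
proof
  assume "theta p x = 0"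
  then consider j where "p ^ j * x = 1" | j where "p ^ j * (p / x) = 1"
    using p by (auto simp: theta_eq_qpoch_inf qpoch_inf_eq_0_iff)
  then show "\<exists>k::int. x = p powi k"
  proof cases
    case 1
    with p have "x = p powi (- int j)" by (simp add: power_int_minus field_simps)
    then show ?thesis by blast
  next
    case 2
    with \<open>x \<noteq> 0\<close> have "x = p ^ Suc j" by (simp add: field_simps)
    then have "x = p powi int (Suc j)" by (simp only: power_int_of_nat)
    then show ?thesis by blast
  qed
next
  assume "\<exists>k::int. x = p powi k"
  then obtain k :: int where k: "x = p powi k * 1" by auto
  have "theta p (p powi k * 1) = 0"
    by (rule power_int_orbit_invariant[where P = "\<lambda>z. theta p z = 0"])
       (use p theta_one theta_mult_nome in auto)
  then show "theta p x = 0" by (simp only: k)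
qed

lemma deriv_theta_mult_nome:
  assumes p: "norm p < 1" "p \<noteq> 0" and x: "x \<noteq> 0" and "theta p x = 0"
  shows "deriv (theta p) (p * x) = - deriv (theta p) x / (p * x)"
proof -
  have "((\<lambda>y. theta p (p * y)) has_field_derivative deriv (theta p) (p * x) * p) (at x)"
    using DERIV_chain2[OF theta_has_field_derivative DERIV_cmult_Id] p x by simp
  moreover have "((\<lambda>y. theta p (p * y)) has_field_derivative - deriv (theta p) x / x) (at x)"
  proof (rule has_field_derivative_transform_within_open)
    show "((\<lambda>y. - theta p y / y) has_field_derivative - deriv (theta p) x / x) (at x)"
      using assms by (auto intro!: derivative_eq_intros theta_has_field_derivative simp: field_simps)
    show "- theta p y / y = theta p (p * y)" if "y \<in> - {0}" for y
      using theta_mult_nome[OF p, of y] that by simp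
  qed (use x in auto)
  ultimately have "deriv (theta p) (p * x) * p = - deriv (theta p) x / x"
    by (rule DERIV_unique)
  with p x show ?thesis by (simp add: field_simps)
qed

lemma deriv_theta_one_nonzero:
  assumes "norm p < 1"
  shows "deriv (theta p) 1 \<noteq> 0"
proof -
  define R where "R x = qpoch_inf p (p * x) * qpoch_inf p (p / x)" for x
  have "R holomorphic_on - {0}"
    unfolding R_def using assms by (intro holomorphic_intros) auto
  then have "(R has_field_derivative deriv R 1) (at 1)"
    by (intro holomorphic_derivI) auto
  then have "((\<lambda>x. (1 - x) * R x) has_field_derivative - R 1) (at 1)"
    by (auto intro!: derivative_eq_intros)
  moreover have "theta p = (\<lambda>x. (1 - x) * R x)"
    unfolding R_def using theta_eq_one_minus[OF assms] by blast
  ultimately have "deriv (theta p) 1 = - R 1"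
    by (simp add: DERIV_imp_deriv)
  moreover have "R 1 \<noteq> 0"
    unfolding R_def using qpoch_inf_self_nonzero[OF assms] by simp
  ultimately show ?thesis by simp
qed

text \<open>The zeros of theta form the orbit of 1 under \<open>z \<mapsto> p z\<close>, along which simplicity
  propagates by \<open>deriv_theta_mult_nome\<close>.\<close>
lemma deriv_theta_nonzero:
  assumes p: "norm p < 1" "p \<noteq> 0" and "x \<noteq> 0" "theta p x = 0"
  shows "deriv (theta p) x \<noteq> 0"
proof -
  obtain k :: int where k: "x = p powi k * 1"
    using assms theta_eq_0_iff by auto
  have "theta p (p powi k * 1) = 0 \<and> deriv (theta p) (p powi k * 1) \<noteq> 0"
  proof (rule power_int_orbit_invariant[where P = "\<lambda>z. theta p z = 0 \<and> deriv (theta p) z \<noteq> 0"])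
    fix z :: complex assume "z \<noteq> 0"
    then show "(theta p (p * z) = 0 \<and> deriv (theta p) (p * z) \<noteq> 0) \<longleftrightarrow>
        (theta p z = 0 \<and> deriv (theta p) z \<noteq> 0)"
      using p by (auto simp: theta_mult_nome deriv_theta_mult_nome)
  qed (use p theta_one deriv_theta_one_nonzero in auto)
  then show ?thesis unfolding k by (rule conjunct2)
qed

section \<open>Quasi-periodic functions on the punctured plane\<close>

lemma eventually_nonzero_at_simple_zero:
  assumes "G holomorphic_on S" "open S" "z \<in> S" "G z = 0 \<Longrightarrow> deriv G z \<noteq> 0"
  shows "eventually (\<lambda>y. G y \<noteq> 0) (at z)"
proof -
  have G': "(G has_field_derivative deriv G z) (at z)"
    using assms(1-3) by (rule holomorphic_derivI)
  show ?thesis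
  proof (cases "G z = 0")
    case True
    from G' have "((\<lambda>y. (G y - G z) / (y - z)) \<longlongrightarrow> deriv G z) (at z)"
      by (simp add: has_field_derivative_iff)
    then have "eventually (\<lambda>y. (G y - G z) / (y - z) \<noteq> 0) (at z)"
      using True assms(4) by (intro tendsto_imp_eventually_ne) auto
    then show ?thesis
      by eventually_elim (use True in auto)
  next
    case False
    have "(G \<longlongrightarrow> G z) (at z)"
      using DERIV_isCont[OF G'] by (simp add: isCont_def)
    then show ?thesis
      using False by (rule tendsto_imp_eventually_ne)
  qed
qed

text \<open>The quotient F / G, with its removable singularities at the simple zeros of G
  filled in by l'Hopital's rule.\<close>
definition simple_zero_quotient ::
    "(complex \<Rightarrow> complex) \<Rightarrow> (complex \<Rightarrow> complex) \<Rightarrow> complex \<Rightarrow> complex" where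
  "simple_zero_quotient F G z = (if G z = 0 then deriv F z / deriv G z else F z / G z)"

lemma tendsto_simple_zero_quotient:
  assumes "F holomorphic_on S" "G holomorphic_on S" "open S" "z \<in> S"
    and "G z = 0 \<Longrightarrow> F z = 0 \<and> deriv G z \<noteq> 0"
  shows "((\<lambda>y. F y / G y) \<longlongrightarrow> simple_zero_quotient F G z) (at z)"
proof -
  have F': "(F has_field_derivative deriv F z) (at z)"
    using assms(1,3,4) by (rule holomorphic_derivI)
  have G': "(G has_field_derivative deriv G z) (at z)"
    using assms(2-4) by (rule holomorphic_derivI)
  show ?thesis
  proof (cases "G z = 0")
    case True
    have "((\<lambda>y. ((F y - F z) / (y - z)) / ((G y - G z) / (y - z))) \<longlongrightarrow> deriv F z / deriv G z) (at z)"
      using F' G' True assms(5) by (intro tendsto_divide) (auto simp: has_field_derivative_iff)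
    moreover have "eventually (\<lambda>y. ((F y - F z) / (y - z)) / ((G y - G z) / (y - z)) = F y / G y) (at z)"
      using True assms(5) by (auto simp: eventually_at_filter)
    ultimately show ?thesis
      using True unfolding simple_zero_quotient_def by (simp add: Lim_transform_eventually)
  next
    case False
    then show ?thesis
      using DERIV_isCont[OF F'] DERIV_isCont[OF G']
      unfolding simple_zero_quotient_def by (auto simp: isCont_def intro!: tendsto_divide)
  qed
qed

lemma holomorphic_simple_zero_quotient:
  assumes F: "F holomorphic_on S" and G: "G holomorphic_on S" and "open S"
    and zeros: "\<And>z. z \<in> S \<Longrightarrow> G z = 0 \<Longrightarrow> F z = 0 \<and> deriv G z \<noteq> 0"
  shows "simple_zero_quotient F G holomorphic_on S"
proof -
  have "simple_zero_quotient F G analytic_on {z}" if z: "z \<in> S" for z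
  proof -
    have "eventually (\<lambda>y. G y \<noteq> 0 \<and> y \<in> S) (at z)"
      using eventually_nonzero_at_simple_zero[OF G \<open>open S\<close> z] zeros[OF z]
        eventually_at_in_open'[OF \<open>open S\<close> z] by (auto elim: eventually_conj)
    then obtain e where "e > 0" and e: "\<And>y. y \<noteq> z \<Longrightarrow> dist y z < e \<Longrightarrow> G y \<noteq> 0 \<and> y \<in> S"
      unfolding eventually_at by auto
    have sub: "ball z e \<subseteq> S"
    proof
      fix y assume "y \<in> ball z e"
      then show "y \<in> S"
        using e z by (cases "y = z") (auto simp: dist_commute)
    qed
    have "(\<lambda>y. F y / G y) holomorphic_on ball z e - {z}"
      using e holomorphic_on_subset[OF F sub] holomorphic_on_subset[OF G sub]
      by (intro holomorphic_intros) (auto simp: dist_commute)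
    then have "(\<lambda>y. if y = z then simple_zero_quotient F G z else F y / G y) holomorphic_on ball z e"
      using tendsto_simple_zero_quotient[OF F G \<open>open S\<close> z zeros[OF z]]
      by (intro removable_singularity) auto
    then have "simple_zero_quotient F G holomorphic_on ball z e"
      by (rule holomorphic_transform)
         (use e in \<open>auto simp: simple_zero_quotient_def dist_commute\<close>)
    then show ?thesis
      using \<open>e > 0\<close> analytic_on_def by blast
  qed
  then show ?thesis
    using \<open>open S\<close> analytic_on_analytic_at analytic_on_open by blast
qed

lemma simple_zero_quotient_mult_invariant:
  assumes F: "F holomorphic_on - {0}" and G: "G holomorphic_on - {0}"
    and zeros: "\<And>z. z \<noteq> 0 \<Longrightarrow> G z = 0 \<Longrightarrow> F z = 0 \<and> deriv G z \<noteq> 0"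
    and "p \<noteq> 0" and mult: "\<And>z. z \<noteq> 0 \<Longrightarrow> F (p * z) = m z * F z \<and> G (p * z) = m z * G z \<and> m z \<noteq> 0"
    and "z \<noteq> 0"
  shows "simple_zero_quotient F G (p * z) = simple_zero_quotient F G z"
proof -
  let ?H = "simple_zero_quotient F G"
  have "continuous_on (- {0}) ?H"
    by (intro holomorphic_on_imp_continuous_on holomorphic_simple_zero_quotient F G zeros) auto
  then have cont: "isCont ?H y" if "y \<noteq> 0" for y
    using that continuous_on_eq_continuous_at[of "- {0}"] by (auto simp: open_Compl)
  have lim: "((\<lambda>y. ?H (p * y)) \<longlongrightarrow> ?H (p * z)) (at z)"
    using \<open>p \<noteq> 0\<close> \<open>z \<noteq> 0\<close> by (intro isCont_tendsto_compose[OF cont]) (auto intro!: tendsto_eq_intros)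
  have "open (- {0 :: complex})"
    by (simp add: open_Compl)
  then have "eventually (\<lambda>y. G y \<noteq> 0) (at z)" "eventually (\<lambda>y. y \<in> - {0}) (at z)"
    using eventually_nonzero_at_simple_zero[OF G] eventually_at_in_open'[of "- {0}" z] zeros \<open>z \<noteq> 0\<close>
    by auto
  then have "eventually (\<lambda>y. ?H (p * y) = ?H y) (at z)"
    by eventually_elim (use mult in \<open>auto simp: simple_zero_quotient_def\<close>)
  with lim have "(?H \<longlongrightarrow> ?H (p * z)) (at z)"
    by (rule Lim_transform_eventually)
  moreover have "(?H \<longlongrightarrow> ?H z) (at z)"
    using cont[OF \<open>z \<noteq> 0\<close>] by (simp add: isCont_def)
  ultimately show ?thesis
    by (rule tendsto_unique[OF trivial_limit_at])
qed

lemma exists_power_int_in_annulus: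
  fixes p z :: complex
  assumes p: "0 < norm p" "norm p < 1" and "z \<noteq> 0"
  obtains k :: int where "norm p \<le> norm (p powi k * z)" "norm (p powi k * z) \<le> 1"
proof -
  define L where "L = log (norm p) (norm z)"
  define k where "k = - \<lfloor>L\<rfloor>"
  have "norm (p powi k * z) = norm p powr k * norm p powr L"
    using p \<open>z \<noteq> 0\<close> by (simp add: L_def norm_mult norm_power_int powr_real_of_int')
  also have "\<dots> = norm p powr (k + L)"
    by (simp add: powr_add)
  finally have eq: "norm (p powi k * z) = norm p powr (k + L)" .
  have "0 \<le> k + L" "k + L \<le> 1"
    unfolding k_def by linarith+
  then have "norm p powr 1 \<le> norm p powr (k + L)" "norm p powr (k + L) \<le> norm p powr 0"
    using p by (intro powr_mono'; simp)+
  then show ?thesis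
    using p eq by (intro that[of k]) auto
qed

lemma mult_invariant_holomorphic_constant:
  assumes p: "0 < norm p" "norm p < 1" and H: "H holomorphic_on - {0}"
    and inv: "\<And>z. z \<noteq> 0 \<Longrightarrow> H (p * z) = H z"
  obtains c where "\<And>z. z \<noteq> 0 \<Longrightarrow> H z = c"
proof -
  define K where "K = cball (0::complex) 1 - ball 0 (norm p)"
  have "K \<subseteq> - {0}"
    unfolding K_def using p by auto
  then have "continuous_on K H"
    by (intro holomorphic_on_imp_continuous_on holomorphic_on_subset[OF H])
  moreover have "compact K"
    unfolding K_def using compact_cball open_ball by (rule compact_diff)
  ultimately have "compact (H ` K)"
    by (rule compact_continuous_image)
  then have "bounded (H ` K)"
    by (rule compact_imp_bounded)
  then obtain B where B: "\<And>w. w \<in> K \<Longrightarrow> norm (H w) \<le> B"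
    unfolding bounded_iff by blast
  have bound: "norm (H z) \<le> B" if "z \<noteq> 0" for z
  proof -
    obtain k :: int where "norm p \<le> norm (p powi k * z)" "norm (p powi k * z) \<le> 1"
      using exists_power_int_in_annulus[OF p \<open>z \<noteq> 0\<close>] by blast
    then have k: "p powi k * z \<in> K"
      unfolding K_def by simp
    have "H (p powi k * z) = H z"
      using p inv \<open>z \<noteq> 0\<close> by (intro power_int_orbit_invariant[where P = "\<lambda>y. H y = H z"]) auto
    then show ?thesis
      using B[OF k] by simp
  qed
  have "(\<lambda>w. H (exp w)) holomorphic_on UNIV"
    using holomorphic_on_compose_gen[OF holomorphic_on_exp H, of UNIV] by (auto simp: o_def image_iff)
  moreover have "bounded (range (\<lambda>w. H (exp w)))"
    unfolding bounded_iff using bound by (intro exI[of _ B]) auto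
  ultimately have "(\<lambda>w. H (exp w)) constant_on UNIV"
    by (rule Liouville_theorem)
  then obtain c where c: "\<And>w. H (exp w) = c"
    unfolding constant_on_def by blast
  show ?thesis
  proof (rule that)
    fix z :: complex assume "z \<noteq> 0"
    then show "H z = c"
      using c[of "Ln z"] by simp
  qed
qed

lemma quasi_periodic_proportional:
  assumes p: "0 < norm p" "norm p < 1"
    and F: "F holomorphic_on - {0}" and G: "G holomorphic_on - {0}"
    and zeros: "\<And>z. z \<noteq> 0 \<Longrightarrow> G z = 0 \<Longrightarrow> F z = 0 \<and> deriv G z \<noteq> 0"
    and mult: "\<And>z. z \<noteq> 0 \<Longrightarrow> F (p * z) = m z * F z \<and> G (p * z) = m z * G z \<and> m z \<noteq> 0"
  obtains c where "\<And>z. z \<noteq> 0 \<Longrightarrow> F z = c * G z"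
proof -
  have "simple_zero_quotient F G holomorphic_on - {0}"
    by (rule holomorphic_simple_zero_quotient[OF F G]) (use zeros in auto)
  moreover have "simple_zero_quotient F G (p * z) = simple_zero_quotient F G z" if "z \<noteq> 0" for z
    using p by (intro simple_zero_quotient_mult_invariant[OF F G zeros _ mult that]) auto
  ultimately obtain c where c: "\<And>z. z \<noteq> 0 \<Longrightarrow> simple_zero_quotient F G z = c"
    using mult_invariant_holomorphic_constant[OF p] by blast
  show ?thesis
  proof (rule that)
    fix z :: complex assume "z \<noteq> 0"
    then show "F z = c * G z"
      using c[of z] zeros[of z] by (cases "G z = 0") (auto simp: simple_zero_quotient_def field_simps)
  qed
qed

section \<open>The addition formula\<close>

definition theta_pair :: "complex \<Rightarrow> complex \<Rightarrow> complex \<Rightarrow> complex \<Rightarrow> complex" where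
  "theta_pair p \<alpha> \<beta> w = theta p (\<alpha> * w) * theta p (\<beta> / w)"

lemma theta_pair_mult_nome:
  assumes p: "norm p < 1" "p \<noteq> 0" and "\<alpha> \<noteq> 0" "\<beta> \<noteq> 0" "w \<noteq> 0"
  shows "theta_pair p \<alpha> \<beta> (p * w) = \<beta> / (\<alpha> * p * w\<^sup>2) * theta_pair p \<alpha> \<beta> w"
proof -
  have A: "theta p (\<alpha> * (p * w)) = - theta p (\<alpha> * w) / (\<alpha> * w)"
    using theta_mult_nome[OF p, of "\<alpha> * w"] assms by (simp add: ac_simps)
  have B: "theta p (\<beta> / (p * w)) = - (\<beta> / w / p) * theta p (\<beta> / w)"
    using theta_div_nome[OF p, of "\<beta> / w"] assms by (simp add: mult.commute)
  show ?thesis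
    unfolding theta_pair_def A B using assms by (simp add: field_simps power2_eq_square)
qed

lemma holomorphic_on_theta_pair:
  assumes "norm p < 1" "\<alpha> \<noteq> 0" "\<beta> \<noteq> 0"
  shows "theta_pair p \<alpha> \<beta> holomorphic_on - {0}"
  unfolding theta_pair_def using assms
  by (intro holomorphic_intros holomorphic_on_theta_comp) auto

lemma deriv_theta_pair_nonzero:
  assumes p: "norm p < 1" "p \<noteq> 0" and nz: "\<alpha> \<noteq> 0" "\<beta> \<noteq> 0" "z \<noteq> 0"
    and generic: "\<And>k::int. \<alpha> * \<beta> \<noteq> p powi k"
    and zero: "theta_pair p \<alpha> \<beta> z = 0"
  shows "deriv (theta_pair p \<alpha> \<beta>) z \<noteq> 0"
proof -
  let ?A = "theta p (\<alpha> * z)" and ?B = "theta p (\<beta> / z)"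
  let ?A' = "deriv (theta p) (\<alpha> * z)" and ?B' = "deriv (theta p) (\<beta> / z)"
  have "(theta_pair p \<alpha> \<beta> has_field_derivative ?A' * \<alpha> * ?B + ?A * (?B' * (- \<beta> / z\<^sup>2))) (at z)"
    unfolding theta_pair_def using nz
    by (auto intro!: derivative_eq_intros DERIV_chain2[OF theta_has_field_derivative[OF p(1)]]
             simp: power2_eq_square)
  then have deriv: "deriv (theta_pair p \<alpha> \<beta>) z = ?A' * \<alpha> * ?B + ?A * (?B' * (- \<beta> / z\<^sup>2))"
    by (rule DERIV_imp_deriv)
  have "\<not> (?A = 0 \<and> ?B = 0)"
  proof
    assume "?A = 0 \<and> ?B = 0"
    then obtain k j :: int where "\<alpha> * z = p powi k" "\<beta> / z = p powi j"
      using nz p theta_eq_0_iff by (metis divide_eq_0_iff mult_eq_0_iff)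
    then have "\<alpha> * \<beta> = p powi (k + j)"
      using nz p by (simp add: power_int_add field_simps)
    with generic show False by blast
  qed
  moreover have "?A = 0 \<or> ?B = 0"
    using zero unfolding theta_pair_def by simp
  ultimately show ?thesis
    unfolding deriv using nz p deriv_theta_nonzero[OF p] by auto
qed

text \<open>The difference of the two sides of the addition formula as a function of \<open>w = b\<close>,
  with \<open>c\<close> and \<open>M = b d\<close> fixed.\<close>
definition addition_defect ::
    "complex \<Rightarrow> complex \<Rightarrow> complex \<Rightarrow> complex \<Rightarrow> complex \<Rightarrow> complex \<Rightarrow> complex \<Rightarrow> complex" where
  "addition_defect p u1 u2 u3 c M w =
     theta p (u2 / u3) * theta p (u1 * c) * theta_pair p u1 (u1 * M) w
     - u1 / u2 * theta p (u1 / u3) * theta p (u2 * c) * theta_pair p u2 (u2 * M) w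
     - theta p (u1 / u2) * theta p (1 / (u3 * c)) * theta_pair p (1 / (u3 * M)) (1 / u3) w"

lemma addition_defect_mult_nome:
  assumes p: "norm p < 1" "p \<noteq> 0" and nz: "u1 \<noteq> 0" "u2 \<noteq> 0" "u3 \<noteq> 0" "M \<noteq> 0" "w \<noteq> 0"
  shows "addition_defect p u1 u2 u3 c M (p * w) = M / (p * w\<^sup>2) * addition_defect p u1 u2 u3 c M w"
proof -
  have "theta_pair p \<alpha> \<beta> (p * w) = M / (p * w\<^sup>2) * theta_pair p \<alpha> \<beta> w"
    if "\<alpha> \<noteq> 0" "\<beta> = \<alpha> * M" for \<alpha> \<beta>
    using theta_pair_mult_nome[OF p, of \<alpha> \<beta> w] that nz by simp
  from this[of u1] this[of u2] this[of "1 / (u3 * M)" "1 / u3"] show ?thesis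
    unfolding addition_defect_def using nz by (simp add: algebra_simps)
qed

lemma holomorphic_on_addition_defect:
  assumes "norm p < 1" "u1 \<noteq> 0" "u2 \<noteq> 0" "u3 \<noteq> 0" "M \<noteq> 0"
  shows "addition_defect p u1 u2 u3 c M holomorphic_on - {0}"
  unfolding addition_defect_def using assms
  by (intro holomorphic_intros holomorphic_on_theta_pair) auto

lemma addition_defect_zeros:
  assumes p: "norm p < 1" and nz: "u1 \<noteq> 0" "u2 \<noteq> 0" "u3 \<noteq> 0" "c \<noteq> 0"
    and M: "M * u1 * u2 * u3 * c = 1"
  shows "addition_defect p u1 u2 u3 c M (1 / u1) = 0"
    and "addition_defect p u1 u2 u3 c M (u1 * M) = 0"
    and "addition_defect p u1 u2 u3 c M (1 / u2) = 0"
proof -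
  have M_eq: "M = 1 / (u1 * u2 * u3 * c)"
    using M nz by (simp add: field_simps)
  have swap: "theta p (u2 / u1) = - theta p (u1 / u2) * (u2 / u1)"
    using theta_inverse[OF p, of "u1 / u2"] nz by (simp add: field_simps)
  have "u1 * (1 / u1) = 1" "u2 * (1 / u1) = u2 / u1" "u2 * M / (1 / u1) = 1 / (u3 * c)"
    "1 / (u3 * M) * (1 / u1) = u2 * c" "1 / u3 / (1 / u1) = u1 / u3"
    using nz unfolding M_eq by (simp_all add: field_simps)
  then show "addition_defect p u1 u2 u3 c M (1 / u1) = 0"
    unfolding addition_defect_def theta_pair_def
    by (simp only:) (simp add: theta_one[OF p] swap nz field_simps)
  have "u1 * M / (u1 * M) = 1" "u2 * (u1 * M) = 1 / (u3 * c)" "u2 * M / (u1 * M) = u2 / u1"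
    "1 / (u3 * M) * (u1 * M) = u1 / u3" "1 / u3 / (u1 * M) = u2 * c"
    using nz unfolding M_eq by (simp_all add: field_simps)
  then show "addition_defect p u1 u2 u3 c M (u1 * M) = 0"
    unfolding addition_defect_def theta_pair_def
    by (simp only:) (simp add: theta_one[OF p] swap nz field_simps)
  have "u1 * (1 / u2) = u1 / u2" "u1 * M / (1 / u2) = 1 / (u3 * c)" "u2 * (1 / u2) = 1"
    "1 / (u3 * M) * (1 / u2) = u1 * c" "1 / u3 / (1 / u2) = u2 / u3"
    using nz unfolding M_eq by (simp_all add: field_simps)
  then show "addition_defect p u1 u2 u3 c M (1 / u2) = 0"
    unfolding addition_defect_def theta_pair_def by (simp only:) (simp add: theta_one[OF p])
qed

lemma addition_defect_eq_0_at_pair_zero: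
  assumes p: "norm p < 1" "p \<noteq> 0" and nz: "u1 \<noteq> 0" "u2 \<noteq> 0" "u3 \<noteq> 0" "c \<noteq> 0" "z \<noteq> 0"
    and M: "M * u1 * u2 * u3 * c = 1" and zero: "theta_pair p u1 (u1 * M) z = 0"
  shows "addition_defect p u1 u2 u3 c M z = 0"
proof -
  have M0: "M \<noteq> 0"
    using M by auto
  have orbit: "addition_defect p u1 u2 u3 c M (p powi k * w) = 0"
    if "w \<noteq> 0" "addition_defect p u1 u2 u3 c M w = 0" for k w
    using that p nz M0
    by (intro power_int_orbit_invariant[where P = "\<lambda>y. addition_defect p u1 u2 u3 c M y = 0"])
       (auto simp: addition_defect_mult_nome)
  from zero consider k :: int where "u1 * z = p powi k" | k :: int where "u1 * M / z = p powi k"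
    unfolding theta_pair_def using theta_eq_0_iff[OF p] nz M0 by (metis divide_eq_0_iff mult_eq_0_iff)
  then show ?thesis
  proof cases
    case 1
    then have "z = p powi k * (1 / u1)"
      using nz by (simp add: field_simps)
    then show ?thesis
      using orbit[of "1 / u1" k] addition_defect_zeros(1)[OF p(1) nz(1-4) M] nz by simp
  next
    case 2
    then have "z = p powi (- k) * (u1 * M)"
      using nz p by (simp add: power_int_minus field_simps)
    then show ?thesis
      using orbit[of "u1 * M" "- k"] addition_defect_zeros(2)[OF p(1) nz(1-4) M] nz M0 by simp
  qed
qed

text \<open>The genericity hypotheses make all zeros of \<open>theta_pair p u1 (b d u1)\<close> simple and keep
  \<open>1 / u2\<close> off them.\<close>
lemma theta_addition_generic:
  fixes p u1 u2 u3 b c d :: complex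
  assumes p: "0 < norm p" "norm p < 1"
    and nz: "u1 \<noteq> 0" "u2 \<noteq> 0" "u3 \<noteq> 0" "b \<noteq> 0" "c \<noteq> 0" "d \<noteq> 0"
    and bal: "u1 * u2 * u3 * (b * c * d) = 1"
    and generic: "\<And>k::int. b * d * u1\<^sup>2 \<noteq> p powi k"
      "theta p (u1 / u2) \<noteq> 0" "theta p (1 / (u3 * c)) \<noteq> 0"
  shows "theta p (u2 / u3) * (theta p (u1 * b) * theta p (u1 * c) * theta p (u1 * d)) =
      u1 / u2 * theta p (u1 / u3) * (theta p (u2 * b) * theta p (u2 * c) * theta p (u2 * d)) +
      theta p (u1 / u2) * (theta p (1 / (u3 * b)) * theta p (1 / (u3 * c)) * theta p (1 / (u3 * d)))"
proof -
  have p0: "p \<noteq> 0"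
    using p by auto
  define M where "M = b * d"
  have M0: "M \<noteq> 0" and M: "M * u1 * u2 * u3 * c = 1"
    using nz bal by (auto simp: M_def ac_simps)
  define F where "F = addition_defect p u1 u2 u3 c M"
  define G where "G = theta_pair p u1 (u1 * M)"
  have zeros: "F z = 0 \<and> deriv G z \<noteq> 0" if "z \<noteq> 0" "G z = 0" for z
    using that p nz M0 M generic(1) unfolding F_def G_def M_def
    by (intro conjI addition_defect_eq_0_at_pair_zero deriv_theta_pair_nonzero)
       (auto simp: power2_eq_square ac_simps)
  have mult: "F (p * w) = M / (p * w\<^sup>2) * F w \<and> G (p * w) = M / (p * w\<^sup>2) * G w \<and> M / (p * w\<^sup>2) \<noteq> 0"
    if "w \<noteq> 0" for w
    using that p0 p nz M0 unfolding F_def G_def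
    by (simp add: addition_defect_mult_nome theta_pair_mult_nome)
  obtain \<kappa> where \<kappa>: "\<And>z. z \<noteq> 0 \<Longrightarrow> F z = \<kappa> * G z"
    using quasi_periodic_proportional[OF p _ _ zeros mult] p nz M0 unfolding F_def G_def
    by (metis holomorphic_on_addition_defect holomorphic_on_theta_pair mult_eq_0_iff)
  have "u1 * M / (1 / u2) = 1 / (u3 * c)"
    using M nz by (simp add: field_simps)
  then have "G (1 / u2) = theta p (u1 / u2) * theta p (1 / (u3 * c))"
    unfolding G_def theta_pair_def by simp
  then have "\<kappa> = 0"
    using \<kappa>[of "1 / u2"] addition_defect_zeros(3)[OF p(2) nz(1-3,5) M] generic(2,3) nz
    unfolding F_def by simp
  then have "F b = 0"
    using \<kappa> nz by simp
  moreover have "u1 * M / b = u1 * d" "u2 * M / b = u2 * d" "1 / (u3 * M) * b = 1 / (u3 * d)"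
    "1 / u3 / b = 1 / (u3 * b)"
    using nz by (simp_all add: M_def field_simps)
  ultimately show ?thesis
    unfolding F_def addition_defect_def theta_pair_def by (simp add: algebra_simps)
qed

lemma continuous_on_eq_0_off_countable:
  fixes f :: "'a::euclidean_space \<Rightarrow> 'b::real_normed_vector"
  assumes "continuous_on S f" "open S" "countable B" "\<And>x. x \<in> S - B \<Longrightarrow> f x = 0" "z \<in> S"
  shows "f z = 0"
proof (rule ccontr)
  assume "f z \<noteq> 0"
  moreover have "(f \<longlongrightarrow> f z) (at z)"
    using assms(1,2,5) continuous_on_eq_continuous_at isCont_def by blast
  ultimately have "eventually (\<lambda>x. f x \<noteq> 0 \<and> x \<in> S) (at z)"
    using eventually_at_in_open'[OF assms(2,5)] tendsto_imp_eventually_ne eventually_conj by blast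
  then obtain d where "d > 0" and d: "\<And>x. x \<noteq> z \<Longrightarrow> dist x z < d \<Longrightarrow> f x \<noteq> 0 \<and> x \<in> S"
    unfolding eventually_at by auto
  have "ball z d - (B \<union> {z}) \<noteq> {}"
    using ball_minus_countable_nonempty[of "B \<union> {z}" d z] \<open>d > 0\<close> assms(3) by simp
  then obtain x where "x \<in> ball z d - (B \<union> {z})"
    by blast
  then show False
    using d[of x] assms(4)[of x] by (auto simp: dist_commute)
qed

lemma generic_rescalings_off_countable:
  fixes p u1 u2 u3 b c d :: complex
  assumes p: "norm p < 1" "p \<noteq> 0" and nz: "u1 \<noteq> 0" "u2 \<noteq> 0" "u3 \<noteq> 0" "b \<noteq> 0" "c \<noteq> 0" "d \<noteq> 0"
  obtains B where "countable B"
    and "\<And>t k. t \<noteq> 0 \<Longrightarrow> t \<notin> B \<Longrightarrow> b * d * (u1 * t)\<^sup>2 \<noteq> p powi k"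
    and "\<And>t. t \<noteq> 0 \<Longrightarrow> t \<notin> B \<Longrightarrow> theta p (u1 * t / u2) \<noteq> 0"
    and "\<And>t. t \<noteq> 0 \<Longrightarrow> t \<notin> B \<Longrightarrow> theta p (1 / (u3 / t * c)) \<noteq> 0"
proof
  define B where "B = (\<Union>k::int. {t. t ^ 2 = p powi k / (b * d * u1\<^sup>2)})
      \<union> range (\<lambda>k::int. p powi k * u2 / u1) \<union> range (\<lambda>k::int. p powi k * (u3 * c))"
  show "countable B"
    unfolding B_def
    by (intro countable_Un countable_UN countable_image countable_finite[OF finite_nth_roots]) auto
  fix t assume t0: "t \<noteq> 0" and tB: "t \<notin> B"
  show "b * d * (u1 * t)\<^sup>2 \<noteq> p powi k" for k :: int
  proof
    assume "b * d * (u1 * t)\<^sup>2 = p powi k"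
    then have "t ^ 2 = p powi k / (b * d * u1\<^sup>2)"
      using nz by (simp add: field_simps power2_eq_square)
    with tB show False
      unfolding B_def by blast
  qed
  show "theta p (u1 * t / u2) \<noteq> 0"
  proof
    assume "theta p (u1 * t / u2) = 0"
    then obtain k :: int where "u1 * t / u2 = p powi k"
      using theta_eq_0_iff[OF p] nz t0 by auto
    then have "t = p powi k * u2 / u1"
      using nz by (simp add: field_simps)
    with tB show False
      unfolding B_def by blast
  qed
  show "theta p (1 / (u3 / t * c)) \<noteq> 0"
  proof
    assume "theta p (1 / (u3 / t * c)) = 0"
    then obtain k :: int where "1 / (u3 / t * c) = p powi k"
      using theta_eq_0_iff[OF p] nz t0 by auto
    then have "t = p powi k * (u3 * c)"
      using nz t0 by (simp add: field_simps)
    with tB show False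
      unfolding B_def by blast
  qed
qed

text \<open>The rescaling \<open>u1 \<mapsto> u1 t\<close>, \<open>u3 \<mapsto> u3 / t\<close> preserves the balancing condition and is
  generic for all but countably many \<open>t\<close>; continuity at \<open>t = 1\<close> does the rest.\<close>
lemma theta_addition:
  fixes p u1 u2 u3 b c d :: complex
  assumes p: "norm p < 1"
    and nz: "u1 \<noteq> 0" "u2 \<noteq> 0" "u3 \<noteq> 0" "b \<noteq> 0" "c \<noteq> 0" "d \<noteq> 0"
    and bal: "u1 * u2 * u3 * (b * c * d) = 1"
  shows "theta p (u2 / u3) * (theta p (u1 * b) * theta p (u1 * c) * theta p (u1 * d)) =
      u1 / u2 * theta p (u1 / u3) * (theta p (u2 * b) * theta p (u2 * c) * theta p (u2 * d)) +
      theta p (u1 / u2) * (theta p (1 / (u3 * b)) * theta p (1 / (u3 * c)) * theta p (1 / (u3 * d)))"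
proof (cases "p = 0")
  case True
  have u3: "u3 = 1 / (u1 * u2 * b * c * d)"
    using bal nz by (simp add: field_simps)
  show ?thesis
    unfolding True theta_nome_zero u3 using nz(1,2,4-6) by (simp add: field_simps)
next
  case False
  then have p': "0 < norm p" "norm p < 1"
    using p by auto
  define E where "E t =
      theta p (u2 / (u3 / t)) * (theta p (u1 * t * b) * theta p (u1 * t * c) * theta p (u1 * t * d))
      - (u1 * t / u2 * theta p (u1 * t / (u3 / t))
         * (theta p (u2 * b) * theta p (u2 * c) * theta p (u2 * d))
        + theta p (u1 * t / u2)
         * (theta p (1 / (u3 / t * b)) * theta p (1 / (u3 / t * c)) * theta p (1 / (u3 / t * d))))"
    for t
  obtain B where "countable B"
    and g1: "\<And>t k. t \<noteq> 0 \<Longrightarrow> t \<notin> B \<Longrightarrow> b * d * (u1 * t)\<^sup>2 \<noteq> p powi k"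
    and g2: "\<And>t. t \<noteq> 0 \<Longrightarrow> t \<notin> B \<Longrightarrow> theta p (u1 * t / u2) \<noteq> 0"
    and g3: "\<And>t. t \<noteq> 0 \<Longrightarrow> t \<notin> B \<Longrightarrow> theta p (1 / (u3 / t * c)) \<noteq> 0"
    using generic_rescalings_off_countable[OF p False nz] by blast
  have continuous: "continuous_on (- {0}) E"
    unfolding E_def using p nz
    by (intro continuous_intros continuous_on_theta_comp) auto
  have vanishing: "E t = 0" if t: "t \<in> - {0} - B" for t
  proof -
    have t0: "t \<noteq> 0" and tB: "t \<notin> B"
      using t by auto
    have "u1 * t \<noteq> 0" "u3 / t \<noteq> 0" "u1 * t * u2 * (u3 / t) * (b * c * d) = 1"
      using nz t0 bal by (simp_all add: field_simps)
    from theta_addition_generic[OF p' this(1) nz(2) this(2) nz(4-6) this(3) g1[OF t0 tB] g2[OF t0 tB]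
        g3[OF t0 tB]]
    show ?thesis
      unfolding E_def by (rule iffD2[OF right_minus_eq])
  qed
  have "E 1 = 0"
    by (rule continuous_on_eq_0_off_countable[OF continuous _ \<open>countable B\<close> vanishing]) auto
  then show ?thesis
    unfolding E_def by simp
qed

section \<open>Column operations\<close>

lemma det_mat_column_recurrence:
  fixes A B :: "nat \<Rightarrow> nat \<Rightarrow> 'a::comm_ring_1"
  assumes "\<And>j k. j < n \<Longrightarrow> k < n \<Longrightarrow>
      B j k = \<alpha> k * A j k + (if k = 0 then 0 else \<beta> k * A j (k - 1))"
  shows "det (mat n n (\<lambda>(j, k). B j k)) = det (mat n n (\<lambda>(j, k). A j k)) * (\<Prod>k<n. \<alpha> k)"
proof -
  define U where "U = mat n n (\<lambda>(i, k). if i = k then \<alpha> k else if Suc i = k then \<beta> k else 0)"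
  have U: "U \<in> carrier_mat n n"
    by (simp add: U_def)
  have "mat n n (\<lambda>(j, k). B j k) = mat n n (\<lambda>(j, k). A j k) * U"
  proof (rule eq_matI)
    fix j k assume "j < dim_row (mat n n (\<lambda>(j, k). A j k) * U)" "k < dim_col (mat n n (\<lambda>(j, k). A j k) * U)"
    then have jk: "j < n" "k < n"
      using U by auto
    have "(\<Sum>i<n. A j i * U $$ (i, k)) =
        (\<Sum>i<n. (if i = k then \<alpha> k * A j k else 0) + (if k \<noteq> 0 \<and> i = k - 1 then \<beta> k * A j (k - 1) else 0))"
      using jk by (intro sum.cong) (auto simp: U_def)
    also have "\<dots> = \<alpha> k * A j k + (if k = 0 then 0 else \<beta> k * A j (k - 1))"
      using jk by (simp add: sum.distrib)
    finally show "mat n n (\<lambda>(j, k). B j k) $$ (j, k) = (mat n n (\<lambda>(j, k). A j k) * U) $$ (j, k)"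
      using jk U assms by (simp add: scalar_prod_def lessThan_atLeast0)
  qed (use U in auto)
  moreover have "det U = (\<Prod>k<n. \<alpha> k)"
  proof -
    have "upper_triangular U"
      unfolding upper_triangular_def U_def by auto
    then have "det U = prod_list (diag_mat U)"
      using U by (rule det_upper_triangular)
    also have "\<dots> = (\<Prod>k<n. \<alpha> k)"
      using U by (simp add: prod_list_diag_prod U_def lessThan_atLeast0)
    finally show ?thesis .
  qed
  ultimately show ?thesis
    using det_mult[OF mat_carrier U] by simp
qed

lemma det_mat_column_recurrence_iterate:
  fixes P :: "nat \<Rightarrow> nat \<Rightarrow> nat \<Rightarrow> 'a::comm_ring_1"
  assumes "\<And>m j k. m < N \<Longrightarrow> j < n \<Longrightarrow> k < n \<Longrightarrow>
      P (Suc m) j k = \<alpha> m k * P m j k + (if k = 0 then 0 else \<beta> m k * P m j (k - 1))"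
  shows "det (mat n n (\<lambda>(j, k). P N j k)) = det (mat n n (\<lambda>(j, k). P 0 j k)) * (\<Prod>m<N. \<Prod>k<n. \<alpha> m k)"
  using assms
proof (induction N)
  case (Suc N)
  then show ?case
    using det_mat_column_recurrence[of n "P (Suc N)" "\<alpha> N" "P N" "\<beta> N"] by (simp add: mult.assoc)
qed simp

section \<open>Determinants of elliptic shifted factorials\<close>

lemma eshift_0 [simp]: "eshift p q x 0 = 1"
  by (simp add: eshift_def)

lemma eshift_Suc: "eshift p q x (Suc k) = eshift p q x k * theta p (x * q ^ k)"
  by (simp add: eshift_def)

definition eshift_mix :: "complex \<Rightarrow> complex \<Rightarrow> complex \<Rightarrow> complex \<Rightarrow> nat \<Rightarrow> nat \<Rightarrow> complex" where
  "eshift_mix p q s x m k = eshift p q x (min m k) * eshift p q (x * s) (k - min m k)"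

lemma eshift_mix_0: "eshift_mix p q s x 0 k = eshift p q (x * s) k"
  by (simp add: eshift_mix_def)

lemma eshift_mix_ge: "k \<le> m \<Longrightarrow> eshift_mix p q s x m k = eshift p q x k"
  by (simp add: eshift_mix_def)

lemma eshift_mix_split:
  assumes "m < k"
  shows "eshift_mix p q s x (Suc m) k = eshift p q x m * eshift p q (x * s) (k - 1 - m) * theta p (x * q ^ m)"
    and "eshift_mix p q s x m k =
      eshift p q x m * eshift p q (x * s) (k - 1 - m) * theta p (x * s * q ^ (k - 1 - m))"
    and "eshift_mix p q s x m (k - 1) = eshift p q x m * eshift p q (x * s) (k - 1 - m)"
  using less_imp_Suc_add[OF assms] unfolding eshift_mix_def by (auto simp: eshift_Suc ac_simps)

lemma eshift_mix_recurrence: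
  fixes p q a s x y z :: complex
  assumes p: "norm p < 1" and nz: "q \<noteq> 0" "a \<noteq> 0" "s \<noteq> 0" "x \<noteq> 0" "y \<noteq> 0" "z \<noteq> 0"
    and bal: "x * y * z * s = a" and "m < k"
  shows "theta p (s * a * q ^ (k - 1) * q ^ (k - 1 - m))
      * (eshift_mix p q s x (Suc m) k * eshift_mix p q s y (Suc m) k * eshift_mix p q s z (Suc m) k)
    = q ^ m / (s * q ^ (k - 1 - m)) * theta p (a * q ^ (k - 1) * q ^ m)
      * (eshift_mix p q s x m k * eshift_mix p q s y m k * eshift_mix p q s z m k)
    + theta p (q ^ m / (s * q ^ (k - 1 - m)))
      * (theta p (a / x * q ^ (k - 1)) * theta p (a / y * q ^ (k - 1)) * theta p (a / z * q ^ (k - 1)))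
      * (eshift_mix p q s x m (k - 1) * eshift_mix p q s y m (k - 1) * eshift_mix p q s z m (k - 1))"
proof -
  define u1 u2 u3 where "u1 = q ^ m" and "u2 = s * q ^ (k - 1 - m)" and "u3 = 1 / (a * q ^ (k - 1))"
  have "q ^ m * q ^ (k - 1 - m) = q ^ (k - 1)"
    using \<open>m < k\<close> by (simp flip: power_add)
  then have "u1 * u2 * u3 * (x * y * z) = 1"
    unfolding u1_def u2_def u3_def using bal nz by (simp add: field_simps)
  moreover have "u1 \<noteq> 0" "u2 \<noteq> 0" "u3 \<noteq> 0"
    unfolding u1_def u2_def u3_def using nz by auto
  ultimately have addition: "theta p (u2 / u3) * (theta p (u1 * x) * theta p (u1 * y) * theta p (u1 * z)) =
      u1 / u2 * theta p (u1 / u3) * (theta p (u2 * x) * theta p (u2 * y) * theta p (u2 * z)) +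
      theta p (u1 / u2) * (theta p (1 / (u3 * x)) * theta p (1 / (u3 * y)) * theta p (1 / (u3 * z)))"
    using nz by (intro theta_addition[OF p]) auto
  have "u2 / u3 = s * a * q ^ (k - 1) * q ^ (k - 1 - m)" "u1 / u3 = a * q ^ (k - 1) * q ^ m"
    "u1 / u2 = q ^ m / (s * q ^ (k - 1 - m))"
    "u1 * x = x * q ^ m" "u1 * y = y * q ^ m" "u1 * z = z * q ^ m"
    "u2 * x = x * s * q ^ (k - 1 - m)" "u2 * y = y * s * q ^ (k - 1 - m)" "u2 * z = z * s * q ^ (k - 1 - m)"
    "1 / (u3 * x) = a / x * q ^ (k - 1)" "1 / (u3 * y) = a / y * q ^ (k - 1)" "1 / (u3 * z) = a / z * q ^ (k - 1)"
    unfolding u1_def u2_def u3_def using nz by (simp_all add: field_simps)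
  note addition = addition[unfolded this]
  define C where "C = eshift p q x m * eshift p q (x * s) (k - 1 - m) * (eshift p q y m * eshift p q (y * s) (k - 1 - m))
      * (eshift p q z m * eshift p q (z * s) (k - 1 - m))"
  show ?thesis
    unfolding eshift_mix_split[OF \<open>m < k\<close>]
    using arg_cong[OF addition, of "\<lambda>t. C * t"] by (simp add: C_def algebra_simps)
qed

text \<open>With \<open>x, y, z = b j, c j, d j\<close>, the \<open>(j, k)\<close> entry of the \<open>m\<close>-th intermediate matrix.\<close>
definition eshift_mix_ratio ::
    "complex \<Rightarrow> complex \<Rightarrow> complex \<Rightarrow> complex \<Rightarrow> complex \<Rightarrow> complex \<Rightarrow> complex \<Rightarrow> nat \<Rightarrow> nat \<Rightarrow> complex" where
  "eshift_mix_ratio p q a s x y z m k =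
     eshift_mix p q s x m k * eshift_mix p q s y m k * eshift_mix p q s z m k
     / (eshift p q (a / x) k * eshift p q (a / y) k * eshift p q (a / z) k)"

lemma eshift_mix_ratio_recurrence:
  fixes p q a s x y z :: complex
  assumes p: "norm p < 1" and nz: "q \<noteq> 0" "a \<noteq> 0" "s \<noteq> 0" "x \<noteq> 0" "y \<noteq> 0" "z \<noteq> 0"
    and bal: "x * y * z * s = a" and "m < k"
    and den: "eshift p q (a / x) k * eshift p q (a / y) k * eshift p q (a / z) k \<noteq> 0"
    and den': "eshift p q (s * a * q ^ (k - 1)) k \<noteq> 0"
  shows "eshift_mix_ratio p q a s x y z (Suc m) k =
      q ^ m / (s * q ^ (k - 1 - m)) * theta p (a * q ^ (k - 1) * q ^ m)
        / theta p (s * a * q ^ (k - 1) * q ^ (k - 1 - m)) * eshift_mix_ratio p q a s x y z m k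
      + theta p (q ^ m / (s * q ^ (k - 1 - m))) / theta p (s * a * q ^ (k - 1) * q ^ (k - 1 - m))
        * eshift_mix_ratio p q a s x y z m (k - 1)"
proof -
  define T where "T = theta p (s * a * q ^ (k - 1) * q ^ (k - 1 - m))"
  define D where "D = eshift p q (a / x) (k - 1) * eshift p q (a / y) (k - 1) * eshift p q (a / z) (k - 1)"
  define Q where "Q = theta p (a / x * q ^ (k - 1)) * theta p (a / y * q ^ (k - 1)) * theta p (a / z * q ^ (k - 1))"
  have k: "k = Suc (k - 1)"
    using \<open>m < k\<close> by simp
  have DQ: "eshift p q (a / x) k * eshift p q (a / y) k * eshift p q (a / z) k = D * Q"
    unfolding D_def Q_def by (subst (1 2 3) k) (simp only: eshift_Suc ac_simps)
  have "T \<noteq> 0"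
    using den' \<open>m < k\<close> unfolding T_def eshift_def by (auto simp: prod_zero_iff)
  moreover have "D \<noteq> 0" "Q \<noteq> 0"
    using den unfolding DQ by auto
  moreover note eshift_mix_recurrence[OF p nz bal \<open>m < k\<close>, folded T_def Q_def]
  ultimately show ?thesis
    unfolding eshift_mix_ratio_def DQ D_def[symmetric] T_def[symmetric]
    by (simp add: field_simps)
qed

lemma eshift_mix_ratio_0:
  assumes "x \<noteq> 0" "y \<noteq> 0" "z \<noteq> 0" "x * y * z * s = a"
  shows "eshift_mix_ratio p q a s x y z 0 k =
    eshift p q (a / (x * y)) k * eshift p q (a / (x * z)) k * eshift p q (a / (y * z)) k
    / (eshift p q (a / x) k * eshift p q (a / y) k * eshift p q (a / z) k)"
proof -
  have "a / (x * y) = z * s" "a / (x * z) = y * s" "a / (y * z) = x * s"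
    using assms by (auto simp: field_simps)
  then show ?thesis
    by (simp add: eshift_mix_ratio_def eshift_mix_0 ac_simps)
qed

lemma eshift_mix_ratio_ge:
  "k \<le> m \<Longrightarrow> eshift_mix_ratio p q a s x y z m k =
    eshift p q x k * eshift p q y k * eshift p q z k
    / (eshift p q (a / x) k * eshift p q (a / y) k * eshift p q (a / z) k)"
  by (simp add: eshift_mix_ratio_def eshift_mix_ge)

lemma prod_lessThan_power_choose_two: "(\<Prod>k<n. x ^ k) = (x :: 'a::comm_monoid_mult) ^ (n choose 2)"
proof (induction n)
  case (Suc n)
  have "Suc n choose 2 = (n choose 2) + n"
    using binomial_Suc_Suc[of n 1] by (simp add: numeral_2_eq_2)
  with Suc show ?case
    by (simp add: power_add)
qed (simp add: numeral_2_eq_2)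

lemma prod_lessThan_rev:
  fixes f :: "nat \<Rightarrow> 'a::comm_monoid_mult"
  shows "(\<Prod>m<k. f (k - 1 - m)) = (\<Prod>m<k. f m)"
  using prod.nat_diff_reindex[of f k] by (simp only: diff_Suc_eq_diff_pred)

lemma prod_recurrence_coefficients:
  fixes p q a e s :: complex
  assumes "q \<noteq> 0" "s \<noteq> 0"
  shows "(\<Prod>m<k. q ^ m / (s * q ^ (k - 1 - m)) * theta p (a * q ^ (k - 1) * q ^ m)
            / theta p (e * q ^ (k - 1) * q ^ (k - 1 - m)))
       = (1 / s) ^ k * (eshift p q (a * q ^ (k - 1)) k / eshift p q (e * q ^ (k - 1)) k)"
proof -
  have "(\<Prod>m<k. q ^ m / (s * q ^ (k - 1 - m))) = (\<Prod>m<k. q ^ m) / (s ^ k * (\<Prod>m<k. q ^ (k - 1 - m)))"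
    by (simp add: prod_dividef prod.distrib)
  also have "\<dots> = (1 / s) ^ k"
    using assms prod_lessThan_rev[of "\<lambda>m. q ^ m" k] by (simp add: power_one_over)
  finally have "(\<Prod>m<k. q ^ m / (s * q ^ (k - 1 - m))) = (1 / s) ^ k" .
  moreover have "(\<Prod>m<k. theta p (e * q ^ (k - 1) * q ^ (k - 1 - m))) = eshift p q (e * q ^ (k - 1)) k"
    unfolding eshift_def by (rule prod_lessThan_rev)
  ultimately show ?thesis
    unfolding eshift_def prod_dividef prod.distrib by simp
qed

lemma prod_lessThan_eq_prod_shifted:
  fixes f :: "nat \<Rightarrow> 'a::comm_monoid_mult"
  assumes "f 0 = 1"
  shows "(\<Prod>k<n. f k) = (\<Prod>j\<in>{2..n}. f (j - 1))"
proof -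
  have "(\<Prod>k<n. f k) = (\<Prod>k\<in>{1..<n}. f k)"
    using assms by (cases n) (auto simp: lessThan_atLeast0 prod.atLeast_Suc_lessThan)
  also have "\<dots> = (\<Prod>j\<in>{2..n}. f (j - 1))"
    by (rule prod.reindex_bij_witness[where i = "\<lambda>j. j - 1" and j = "\<lambda>k. k + 1"]) auto
  finally show ?thesis .
qed

lemma prod_column_recurrence_coefficients:
  fixes p q a e s :: complex
  assumes "q \<noteq> 0" "s \<noteq> 0"
  shows "(\<Prod>m<n. \<Prod>k<n. if m < k then q ^ m / (s * q ^ (k - 1 - m)) * theta p (a * q ^ (k - 1) * q ^ m)
            / theta p (e * q ^ (k - 1) * q ^ (k - 1 - m)) else 1)
       = (1 / s) ^ (n choose 2) *
         (\<Prod>j\<in>{2..n}. eshift p q (a * q ^ (j - 2)) (j - 1) / eshift p q (e * q ^ (j - 2)) (j - 1))"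
proof -
  define c where "c m k = q ^ m / (s * q ^ (k - 1 - m)) * theta p (a * q ^ (k - 1) * q ^ m)
      / theta p (e * q ^ (k - 1) * q ^ (k - 1 - m))" for m k
  have "(\<Prod>m<n. \<Prod>k<n. if m < k then c m k else 1) = (\<Prod>k<n. \<Prod>m<k. c m k)"
    by (subst prod.swap) (auto intro!: prod.cong simp: prod.If_cases lessThan_def)
  also have "\<dots> = (\<Prod>k<n. (1 / s) ^ k * (eshift p q (a * q ^ (k - 1)) k / eshift p q (e * q ^ (k - 1)) k))"
    unfolding c_def by (rule prod.cong[OF refl prod_recurrence_coefficients[OF assms]])
  also have "\<dots> = (1 / s) ^ (n choose 2) *
      (\<Prod>k<n. eshift p q (a * q ^ (k - 1)) k / eshift p q (e * q ^ (k - 1)) k)"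
    by (simp only: prod.distrib prod_lessThan_power_choose_two)
  also have "(\<Prod>k<n. eshift p q (a * q ^ (k - 1)) k / eshift p q (e * q ^ (k - 1)) k)
      = (\<Prod>j\<in>{2..n}. eshift p q (a * q ^ (j - 2)) (j - 1) / eshift p q (e * q ^ (j - 2)) (j - 1))"
    by (subst prod_lessThan_eq_prod_shifted) (auto intro: prod.cong simp: numeral_2_eq_2)
  finally show ?thesis
    unfolding c_def .
qed

lemma det_eshift_ratio_transform:
  fixes p q a s :: complex and b c d :: "nat \<Rightarrow> complex"
  assumes p: "norm p < 1" and nz: "q \<noteq> 0" "a \<noteq> 0" "s \<noteq> 0"
    and nzj: "\<And>j. j < n \<Longrightarrow> b j \<noteq> 0 \<and> c j \<noteq> 0 \<and> d j \<noteq> 0"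
    and bal: "\<And>j. j < n \<Longrightarrow> b j * c j * d j * s = a"
    and den: "\<And>j k. j < n \<Longrightarrow> k < n \<Longrightarrow>
      eshift p q (a / b j) k * eshift p q (a / c j) k * eshift p q (a / d j) k \<noteq> 0"
    and den': "\<And>k. k < n \<Longrightarrow> eshift p q (s * a * q ^ (k - 1)) k \<noteq> 0"
  shows "det (mat n n (\<lambda>(j, k). eshift p q (b j) k * eshift p q (c j) k * eshift p q (d j) k
           / (eshift p q (a / b j) k * eshift p q (a / c j) k * eshift p q (a / d j) k)))
       = (1 / s) ^ (n choose 2) *
         (\<Prod>j\<in>{2..n}. eshift p q (a * q ^ (j - 2)) (j - 1) / eshift p q (s * a * q ^ (j - 2)) (j - 1)) *
         det (mat n n (\<lambda>(j, k). eshift p q (a / (b j * c j)) k * eshift p q (a / (b j * d j)) k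
           * eshift p q (a / (c j * d j)) k
           / (eshift p q (a / b j) k * eshift p q (a / c j) k * eshift p q (a / d j) k)))"
proof -
  define P where "P m j k = eshift_mix_ratio p q a s (b j) (c j) (d j) m k" for m j k
  define f where "f m k = (if m < k then q ^ m / (s * q ^ (k - 1 - m)) * theta p (a * q ^ (k - 1) * q ^ m)
      / theta p (s * a * q ^ (k - 1) * q ^ (k - 1 - m)) else 1)" for m k
  define g where "g m k = (if m < k then theta p (q ^ m / (s * q ^ (k - 1 - m)))
      / theta p (s * a * q ^ (k - 1) * q ^ (k - 1 - m)) else 0)" for m k
  have "P (Suc m) j k = f m k * P m j k + (if k = 0 then 0 else g m k * P m j (k - 1))"
    if "j < n" "k < n" for m j k
  proof (cases "m < k")
    case True
    then show ?thesis
      using that nzj bal den den' unfolding P_def f_def g_def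
      by (simp add: eshift_mix_ratio_recurrence[OF p nz] del: eshift_0)
  next
    case False
    then show ?thesis
      unfolding P_def f_def g_def by (simp add: eshift_mix_ratio_ge)
  qed
  then have "det (mat n n (\<lambda>(j, k). P n j k)) = det (mat n n (\<lambda>(j, k). P 0 j k)) * (\<Prod>m<n. \<Prod>k<n. f m k)"
    by (rule det_mat_column_recurrence_iterate)
  also have "(\<Prod>m<n. \<Prod>k<n. f m k) = (1 / s) ^ (n choose 2) *
      (\<Prod>j\<in>{2..n}. eshift p q (a * q ^ (j - 2)) (j - 1) / eshift p q (s * a * q ^ (j - 2)) (j - 1))"
    unfolding f_def by (rule prod_column_recurrence_coefficients[OF nz(1,3)])
  also have "mat n n (\<lambda>(j, k). P 0 j k)
      = mat n n (\<lambda>(j, k). eshift p q (a / (b j * c j)) k * eshift p q (a / (b j * d j)) k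
          * eshift p q (a / (c j * d j)) k / (eshift p q (a / b j) k * eshift p q (a / c j) k * eshift p q (a / d j) k))"
    using nzj bal by (intro cong_mat) (auto simp: P_def eshift_mix_ratio_0)
  also have "mat n n (\<lambda>(j, k). P n j k)
      = mat n n (\<lambda>(j, k). eshift p q (b j) k * eshift p q (c j) k * eshift p q (d j) k
          / (eshift p q (a / b j) k * eshift p q (a / c j) k * eshift p q (a / d j) k))"
    by (rule cong_mat) (auto simp: P_def eshift_mix_ratio_ge)
  finally show ?thesis
    by (simp only: mult.commute)
qed

theorem theorem1p1:
  fixes p q a :: complex and b c d :: "nat \<Rightarrow> complex" and n :: nat
  assumes hp: "norm p < 1" and hq: "q \<noteq> 0"
    and hn: "n \<ge> 1"
    and ha: "a \<noteq> 0"
    and hb: "\<forall>j<n. b j \<noteq> 0" and hc: "\<forall>j<n. c j \<noteq> 0" and hd: "\<forall>j<n. d j \<noteq> 0"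
    and hconst: "\<forall>j<n. b j * c j * d j = b 0 * c 0 * d 0"
    and hden: "\<forall>j<n. \<forall>k<n. eshift p q (a / b j) k * eshift p q (a / c j) k
                                * eshift p q (a / d j) k \<noteq> 0"
    and hden2: "\<forall>j\<in>{2..n}. eshift p q (a ^ 2 / (b 0 * c 0 * d 0) * q ^ (j - 2)) (j - 1) \<noteq> 0"
  shows "(let e = a ^ 2 / (b 0 * c 0 * d 0) in
     det (mat n n (\<lambda>(j, k).
        (eshift p q (b j) k * eshift p q (c j) k * eshift p q (d j) k) /
        (eshift p q (a / b j) k * eshift p q (a / c j) k * eshift p q (a / d j) k)))
   = (a / e) ^ (n choose 2) *
     (\<Prod>j\<in>{2..n}. eshift p q (a * q ^ (j - 2)) (j - 1) / eshift p q (e * q ^ (j - 2)) (j - 1)) *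
     det (mat n n (\<lambda>(j, k).
        (eshift p q (a / (b j * c j)) k * eshift p q (a / (b j * d j)) k * eshift p q (a / (c j * d j)) k) /
        (eshift p q (a / b j) k * eshift p q (a / c j) k * eshift p q (a / d j) k))))"
proof -
  have "0 < n" and nz: "\<And>j. j < n \<Longrightarrow> b j \<noteq> 0 \<and> c j \<noteq> 0 \<and> d j \<noteq> 0"
    using hn hb hc hd by auto
  define s where "s = a / (b 0 * c 0 * d 0)"
  have "b 0 * c 0 * d 0 \<noteq> 0"
    using nz[OF \<open>0 < n\<close>] by simp
  then have s0: "s \<noteq> 0"
    using ha by (simp add: s_def)
  have bal: "b j * c j * d j * s = a" if "j < n" for j
    using hconst[rule_format, OF that] \<open>b 0 * c 0 * d 0 \<noteq> 0\<close> by (simp add: s_def)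
  have e: "a ^ 2 / (b 0 * c 0 * d 0) = s * a" "a / (s * a) = 1 / s"
    using ha s0 by (simp_all add: s_def power2_eq_square)
  have "eshift p q (s * a * q ^ (k - 1)) k \<noteq> 0" if "k < n" for k
    using hden2[rule_format, of "Suc k"] that e by (cases k) auto
  with nz bal hden show ?thesis
    unfolding Let_def e by (intro det_eshift_ratio_transform[OF hp hq ha s0]) auto
qed

end
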